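(* Let $1\le p<\infty$, $\alpha>0$, $m>0$. The Hardy operator $Hf(z)=\frac1z\int_0^zf(w)\,dw$ is not supercyclic on $\mathcal{F}^p_{(\alpha,m)}$.
   Context: For $\alpha>0$, $m>0$ and $1\le p<\infty$, $\mathcal{F}^p_{(\alpha,m)}$ denotes the Banach space of entire functions $f$ on $\mathbb{C}$ with $\|f\|_{(p,\alpha,m)}^p=\int_{\mathbb{C}}|f(z)|^pe^{-p\alpha|z|^m}\,dA(z)<\infty$, where $dA$ is Lebesgue area measure. $Hf(0)$ is understood as $f(0)$. An operator $T$ on a Banach space $X$ is supercyclic if there is $x\in X$ with $\{\lambda T^nx:n\ge0,\lambda\in\mathbb{C}\}$ dense in $X$. *)

theory Defs
  imports "HOL-Complex_Analysis.Complex_Analysis"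
begin

definition fock_space :: "real \<Rightarrow> real \<Rightarrow> real \<Rightarrow> (complex \<Rightarrow> complex) set" where
  "fock_space p \<alpha> m =
     {f. f holomorphic_on UNIV \<and>
         integrable lborel (\<lambda>z. norm (f z) powr p * exp (- p * \<alpha> * norm z powr m))}"

definition fock_norm :: "real \<Rightarrow> real \<Rightarrow> real \<Rightarrow> (complex \<Rightarrow> complex) \<Rightarrow> real" where
  "fock_norm p \<alpha> m f =
     (integral\<^sup>L lborel (\<lambda>z. norm (f z) powr p * exp (- p * \<alpha> * norm z powr m))) powr (1 / p)"

definition hardy :: "(complex \<Rightarrow> complex) \<Rightarrow> complex \<Rightarrow> complex" where
  "hardy f z = (if z = 0 then f 0 else contour_integral (linepath 0 z) f / z)"

definition supercyclic_on ::
  "(complex \<Rightarrow> complex) set \<Rightarrow> ((complex \<Rightarrow> complex) \<Rightarrow> real)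
     \<Rightarrow> ((complex \<Rightarrow> complex) \<Rightarrow> (complex \<Rightarrow> complex)) \<Rightarrow> bool" where
  "supercyclic_on X N T \<longleftrightarrow>
     (\<exists>x\<in>X. (\<forall>n. (T ^^ n) x \<in> X) \<and>
        (\<forall>g\<in>X. \<forall>\<epsilon>>0. \<exists>n c. N (\<lambda>z. c * (T ^^ n) x z - g z) < \<epsilon>))"

end

theory Submission
  imports Defs "HOL-Probability.Sinc_Integral" "HOL-Real_Asymp.Real_Asymp"
begin

text \<open>
  Evaluation of a function and of its derivative at \<open>0\<close> are bounded functionals on the Fock space:
  by the Cauchy estimates, \<open>\<bar>h(0)\<bar>\<close> and \<open>\<bar>h'(0)\<bar>\<close> are bounded by the mean of \<open>\<bar>h\<bar>\<close> over any circle of radius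
  at least \<open>1\<close>; Jensen's inequality and averaging over the annulus \<open>1 \<le> \<bar>z\<bar> \<le> 2\<close> (using the rotation
  invariance of Lebesgue measure) turn this into a bound by the weighted \<open>L\<^sup>p\<close> norm.
  The Hardy operator fixes \<open>h(0)\<close> and halves \<open>h'(0)\<close>. So if \<open>c H\<^sup>n x\<close> were close to \<open>1 + M z\<close>,
  then \<open>c x(0) \<approx> 1\<close> would bound \<open>\<bar>c\<bar>\<close>, while \<open>c x'(0) / 2\<^sup>n \<approx> M\<close> is impossible for \<open>M\<close> large.
\<close>

section \<open>Rotation invariance of Lebesgue measure on the plane\<close>

lemma nn_integral_lborel_complex:
  fixes F :: "complex \<Rightarrow> ennreal"
  assumes [measurable]: "F \<in> borel_measurable borel"
  shows "(\<integral>\<^sup>+z. F z \<partial>lborel) = (\<integral>\<^sup>+x. \<integral>\<^sup>+y. F (Complex x y) \<partial>lborel \<partial>lborel)"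
proof -
  interpret P: product_sigma_finite "\<lambda>b::complex. lborel::real measure"
    by (simp add: product_sigma_finite_def lborel.sigma_finite_measure_axioms)
  have [measurable]: "(\<lambda>z::real\<times>real. Complex (fst z) (snd z)) \<in> borel_measurable (lborel \<Otimes>\<^sub>M lborel)"
    unfolding Complex_eq by measurable
  have Basis_sum: "a *\<^sub>R (1::complex) + b *\<^sub>R \<i> = Complex a b" for a b
    by (simp add: complex_eq_iff)
  have "(\<integral>\<^sup>+z. F z \<partial>lborel) = (\<integral>\<^sup>+f. F (\<Sum>b\<in>Basis. f b *\<^sub>R b) \<partial>(PiM Basis (\<lambda>b. lborel)))"
    by (subst lborel_eq) (simp add: nn_integral_distr)
  also have "\<dots> = (\<integral>\<^sup>+f. F (Complex (f 1) (f \<i>)) \<partial>(PiM {1,\<i>} (\<lambda>b. lborel)))"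
    by (simp add: Basis_complex_def Basis_sum)
  also have "\<dots> = (\<integral>\<^sup>+z. F (Complex (fst z) (snd z)) \<partial>(lborel \<Otimes>\<^sub>M lborel))"
    by (rule P.product_nn_integral_pair) (auto simp: complex_eq_iff)
  also have "\<dots> = (\<integral>\<^sup>+x. \<integral>\<^sup>+y. F (Complex x y) \<partial>lborel \<partial>lborel)"
    by (subst lborel.nn_integral_fst[symmetric]) simp_all
  finally show ?thesis .
qed

lemma nn_integral_lborel_complex':
  fixes F :: "complex \<Rightarrow> ennreal"
  assumes [measurable]: "F \<in> borel_measurable borel"
  shows "(\<integral>\<^sup>+z. F z \<partial>lborel) = (\<integral>\<^sup>+y. \<integral>\<^sup>+x. F (Complex x y) \<partial>lborel \<partial>lborel)"
proof -
  have [measurable]: "(\<lambda>(y, x). F (Complex x y)) \<in> borel_measurable (lborel \<Otimes>\<^sub>M lborel)"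
    unfolding Complex_eq by measurable
  show ?thesis
    unfolding nn_integral_lborel_complex[OF assms] by (subst lborel_pair.Fubini') simp_all
qed

lemma nn_integral_lborel_shear_Re:
  fixes F :: "complex \<Rightarrow> ennreal"
  assumes [measurable]: "F \<in> borel_measurable borel"
  shows "(\<integral>\<^sup>+z. F (z + of_real (a * Im z)) \<partial>lborel) = (\<integral>\<^sup>+z. F z \<partial>lborel)"
proof -
  have shift: "(\<integral>\<^sup>+x. F (Complex (x + a * y) y) \<partial>lborel) = (\<integral>\<^sup>+x. F (Complex x y) \<partial>lborel)" for y
    using nn_integral_real_affine[of "\<lambda>x. F (Complex x y)" 1 "a * y"]
    by (simp add: Complex_eq add.commute)
  have "Complex x y + of_real (a * Im (Complex x y)) = Complex (x + a * y) y" for x y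
    by (simp add: complex_eq_iff)
  then show ?thesis
    by (subst (1 2) nn_integral_lborel_complex') (measurable, simp add: shift)
qed

lemma nn_integral_lborel_shear_Im:
  fixes F :: "complex \<Rightarrow> ennreal"
  assumes [measurable]: "F \<in> borel_measurable borel"
  shows "(\<integral>\<^sup>+z. F (z + \<i> * of_real (b * Re z)) \<partial>lborel) = (\<integral>\<^sup>+z. F z \<partial>lborel)"
proof -
  have shift: "(\<integral>\<^sup>+y. F (Complex x (y + b * x)) \<partial>lborel) = (\<integral>\<^sup>+y. F (Complex x y) \<partial>lborel)" for x
    using nn_integral_real_affine[of "\<lambda>y. F (Complex x y)" 1 "b * x"]
    by (simp add: Complex_eq add.commute)
  have "Complex x y + \<i> * of_real (b * Re (Complex x y)) = Complex x (y + b * x)" for x y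
    by (simp add: complex_eq_iff)
  then show ?thesis
    by (subst (1 2) nn_integral_lborel_complex) (measurable, simp add: shift)
qed

text \<open>A rotation is a product of three shears (Paeth's decomposition).\<close>
lemma rotation_eq_shears:
  assumes u: "norm u = 1" "Re u \<noteq> -1"
  defines "t \<equiv> - Im u / (1 + Re u)"
  shows "u * z = (\<lambda>w. w + of_real (t * Im w)) ((\<lambda>w. w + \<i> * of_real (Im u * Re w)) (z + of_real (t * Im z)))"
proof -
  have unit: "(Re u)\<^sup>2 + (Im u)\<^sup>2 = 1"
    using u(1) by (simp add: cmod_def)
  have "1 + Re u \<noteq> 0" using u(2) by linarith
  then have st: "Im u * t = Re u - 1" and t: "t * (1 + Re u) = - Im u"
    using unit by (auto simp: t_def field_simps power2_eq_square)
  have "Re z + t * Im z + t * (Im z + Im u * (Re z + t * Im z))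
      = (1 + Im u * t) * Re z + (t * (1 + (1 + Im u * t))) * Im z"
    by (simp add: algebra_simps)
  also have "\<dots> = Re u * Re z + (t * (1 + Re u)) * Im z"
    by (simp only: st) (simp add: algebra_simps)
  also have "\<dots> = Re u * Re z - Im u * Im z"
    by (simp only: t)
  finally have "Re z + t * Im z + t * (Im z + Im u * (Re z + t * Im z)) = Re u * Re z - Im u * Im z" .
  moreover have "Im z + Im u * (Re z + t * Im z) = Im u * Re z + (1 + Im u * t) * Im z"
    by (simp add: algebra_simps)
  ultimately show ?thesis
    using st by (simp add: complex_eq_iff)
qed

lemma nn_integral_lborel_rotate:
  fixes F :: "complex \<Rightarrow> ennreal"
  assumes [measurable]: "F \<in> borel_measurable borel" and u: "norm u = 1"
  shows "(\<integral>\<^sup>+z. F (u * z) \<partial>lborel) = (\<integral>\<^sup>+z. F z \<partial>lborel)"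
proof -
  have shears: "(\<integral>\<^sup>+z. G (v * z) \<partial>lborel) = (\<integral>\<^sup>+z. G z \<partial>lborel)"
    if [measurable]: "G \<in> borel_measurable borel" and v: "norm v = 1" "Re v \<noteq> -1" for G v
  proof -
    define t where "t = - Im v / (1 + Re v)"
    define S1 where "S1 = (\<lambda>w. w + of_real (t * Im w))"
    define S2 where "S2 = (\<lambda>w. w + \<i> * of_real (Im v * Re w))"
    have [measurable]: "S1 \<in> borel_measurable borel" "S2 \<in> borel_measurable borel"
      unfolding S1_def S2_def by measurable
    have "(\<integral>\<^sup>+z. G (v * z) \<partial>lborel) = (\<integral>\<^sup>+z. G (S1 (S2 (S1 z))) \<partial>lborel)"
      using rotation_eq_shears[OF v] by (simp add: S1_def S2_def t_def)
    also have "\<dots> = (\<integral>\<^sup>+z. G (S1 (S2 z)) \<partial>lborel)"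
      using nn_integral_lborel_shear_Re[of "\<lambda>w. G (S1 (S2 w))" t] by (simp add: S1_def)
    also have "\<dots> = (\<integral>\<^sup>+z. G (S1 z) \<partial>lborel)"
      using nn_integral_lborel_shear_Im[of "\<lambda>w. G (S1 w)" "Im v"] by (simp add: S2_def)
    also have "\<dots> = (\<integral>\<^sup>+z. G z \<partial>lborel)"
      using nn_integral_lborel_shear_Re[of G t] by (simp add: S1_def)
    finally show ?thesis .
  qed
  \<comment> \<open>The square root of u has nonnegative real part, so it is not a half-turn.\<close>
  define v where "v = csqrt u"
  have v: "norm v = 1" "Re v \<noteq> -1"
    using u Re_csqrt[of u] unfolding v_def by (simp, linarith)
  have "(\<integral>\<^sup>+z. F (u * z) \<partial>lborel) = (\<integral>\<^sup>+z. (\<lambda>w. F (v * w)) (v * z) \<partial>lborel)"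
    by (simp add: v_def mult.assoc[symmetric] power2_eq_square[symmetric])
  also have "\<dots> = (\<integral>\<^sup>+z. F (v * z) \<partial>lborel)"
    by (rule shears) (use v in simp_all)
  also have "\<dots> = (\<integral>\<^sup>+z. F z \<partial>lborel)"
    by (rule shears) (use v in simp_all)
  finally show ?thesis .
qed

section \<open>Bounded point functionals on the Fock space\<close>

lemma continuous_on_norm_circle:
  assumes "h holomorphic_on UNIV"
  shows "continuous_on S (\<lambda>t. norm (h (z * cis (2 * pi * t))))"
  by (intro continuous_intros continuous_on_compose2[OF holomorphic_on_imp_continuous_on[OF assms]])
    (auto simp: cis_conv_exp)

lemma norm_higher_deriv_le_circle_average:
  assumes hol: "h holomorphic_on UNIV"
  shows "norm z ^ n / fact n * norm ((deriv ^^ n) h 0)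
    \<le> integral {0..1} (\<lambda>t. norm (h (z * cis (2 * pi * t))))"
proof (cases "z = 0")
  case True
  then show ?thesis
    by (cases n) (auto intro!: integral_nonneg integrable_continuous_interval continuous_on_norm_circle[OF hol])
next
  case False
  define r where "r = norm z"
  define u where "u = z / of_real r"
  have r: "r > 0" using False by (simp add: r_def)
  have u: "norm u = 1" "u * of_real r = z"
    using r by (simp_all add: u_def r_def norm_divide)
  \<comment> \<open>Rotating \<open>h\<close> by \<open>u\<close> moves the circle through \<open>z\<close> to \<open>circlepath 0 r\<close>.\<close>
  define g where "g = (\<lambda>w. h (u * w))"
  have holg: "g holomorphic_on UNIV"
    unfolding g_def by (rule holomorphic_on_compose_gen[OF _ hol, unfolded o_def]) (auto intro: holomorphic_intros)
  have deriv_g: "(deriv ^^ n) g 0 = u ^ n * (deriv ^^ n) h 0"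
    unfolding g_def using higher_deriv_compose_linear[OF hol open_UNIV open_UNIV, of 0 u n] by simp
  have path: "circlepath 0 r t = of_real r * cis (2 * pi * t)" for t
    by (simp add: circlepath_def part_circlepath_def linepath_def cis_conv_exp algebra_simps)
  have vd: "vector_derivative (circlepath 0 r) (at t) = 2 * pi * \<i> * r * cis (2 * pi * t)" for t
    by (simp add: vector_derivative_circlepath cis_conv_exp mult_ac)
  have "((\<lambda>w. g w / (w - 0) ^ Suc n) has_contour_integral (2 * pi * \<i> / fact n * (deriv ^^ n) g 0)) (circlepath 0 r)"
    using r holg by (intro Cauchy_has_contour_integral_higher_derivative_circlepath)
      (auto intro: holomorphic_on_subset holomorphic_on_imp_continuous_on)
  then have Cauchy: "((\<lambda>t. g (of_real r * cis (2 * pi * t)) / (of_real r * cis (2 * pi * t)) ^ Suc n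
        * (2 * pi * \<i> * r * cis (2 * pi * t))) has_integral (2 * pi * \<i> / fact n * (deriv ^^ n) g 0)) {0..1}"
    unfolding has_contour_integral path vd by simp
  have g_circle: "g (of_real r * w) = h (z * w)" for w
    unfolding g_def by (simp flip: u(2) mult.assoc)
  have norm_integrand: "norm (g (of_real r * cis (2 * pi * t)) / (of_real r * cis (2 * pi * t)) ^ Suc n
        * (2 * pi * \<i> * r * cis (2 * pi * t))) = 2 * pi / r ^ n * norm (h (z * cis (2 * pi * t)))" for t
    using r u by (simp add: g_circle norm_mult norm_divide norm_power field_simps)
  have "norm (2 * pi * \<i> / fact n * (deriv ^^ n) g 0)
      \<le> integral {0..1} (\<lambda>t. 2 * pi / r ^ n * norm (h (z * cis (2 * pi * t))))"
    unfolding integral_unique[OF Cauchy, symmetric]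
  proof (rule integral_norm_bound_integral)
    show "(\<lambda>t. 2 * pi / r ^ n * norm (h (z * cis (2 * pi * t)))) integrable_on {0..1}"
      by (intro integrable_continuous_interval continuous_on_mult continuous_on_const
          continuous_on_norm_circle[OF hol])
  qed (use Cauchy norm_integrand in auto)
  then show ?thesis
    using r u by (simp add: deriv_g norm_mult norm_divide norm_power r_def field_simps)
qed

lemma nn_integral_circle_average:
  fixes F :: "complex \<Rightarrow> ennreal"
  assumes [measurable]: "F \<in> borel_measurable borel"
  shows "(\<integral>\<^sup>+z. \<integral>\<^sup>+t. indicator {0..1} t * F (z * cis (2 * pi * t)) \<partial>lborel \<partial>lborel) = (\<integral>\<^sup>+z. F z \<partial>lborel)"
proof -
  have [measurable]: "cis \<in> borel_measurable borel"
    unfolding cis_conv_exp by measurable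
  have "(\<integral>\<^sup>+z. \<integral>\<^sup>+t. indicator {0..1} t * F (z * cis (2 * pi * t)) \<partial>lborel \<partial>lborel)
      = (\<integral>\<^sup>+t. indicator {0..1} t * \<integral>\<^sup>+z. F (cis (2 * pi * t) * z) \<partial>lborel \<partial>lborel)"
    by (subst pair_sigma_finite.Fubini') (auto simp: pair_sigma_finite_def lborel.sigma_finite_measure_axioms
        nn_integral_cmult mult.commute)
  also have "\<dots> = (\<integral>\<^sup>+(t::real). indicator {0..1} t * \<integral>\<^sup>+z. F z \<partial>lborel \<partial>lborel)"
    by (simp add: nn_integral_lborel_rotate)
  also have "\<dots> = (\<integral>\<^sup>+z. F z \<partial>lborel)"
    by (subst mult.commute) (simp add: nn_integral_cmult_indicator)
  finally show ?thesis .
qed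

lemma powr_ge_tangent:
  fixes p a y :: real
  assumes p: "1 \<le> p" and a: "0 < a" and y: "0 \<le> y"
  shows "a powr p + p * a powr (p - 1) * (y - a) \<le> y powr p"
proof (cases "y = 0")
  case True
  have "a powr p + p * a powr (p - 1) * (0 - a) = (1 - p) * a powr p"
    using a by (simp add: algebra_simps powr_diff)
  also have "\<dots> \<le> 0" using p by (simp add: mult_nonpos_nonneg)
  finally show ?thesis using True by simp
next
  case False
  then have y': "y \<in> {0<..}" using y by simp
  have deriv: "((\<lambda>x. x powr p) has_real_derivative p * a powr (p - 1)) (at a within {0<..})"
    using a by (auto intro!: derivative_eq_intros)
  have "p * a powr (p - 1) * (y - a) \<le> y powr p - a powr p"
    by (rule convex_on_imp_above_tangent[OF powr_convex[OF p] _ _ y' deriv]) (use a in \<open>auto simp: interior_open\<close>)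
  then show ?thesis by simp
qed

text \<open>Jensen's inequality, obtained by integrating the tangent line of \<open>x powr p\<close> at the mean.\<close>
lemma powr_integral_le_integral_powr:
  fixes \<phi> :: "real \<Rightarrow> real"
  assumes cont: "continuous_on {0..1} \<phi>" and nonneg: "\<And>t. t \<in> {0..1} \<Longrightarrow> 0 \<le> \<phi> t" and p: "1 \<le> p"
  shows "(integral {0..1} \<phi>) powr p \<le> integral {0..1} (\<lambda>t. \<phi> t powr p)"
proof -
  have int: "\<phi> integrable_on {0..1}"
    by (rule integrable_continuous_interval[OF cont])
  have int_powr: "(\<lambda>t. \<phi> t powr p) integrable_on {0..1}"
    using p nonneg by (intro integrable_continuous_interval continuous_on_powr' cont continuous_on_const) auto
  define a where "a = integral {0..1} \<phi>"
  have "0 \<le> a" unfolding a_def using nonneg by (intro integral_nonneg int) auto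
  show ?thesis
  proof (cases "a = 0")
    case True
    then show ?thesis unfolding a_def[symmetric] using nonneg by (auto intro!: integral_nonneg int_powr)
  next
    case False
    with \<open>0 \<le> a\<close> have a: "0 < a" by simp
    define D where "D = p * a powr (p - 1)"
    have const: "((\<lambda>t. c) has_integral c) {0..1::real}" for c
      using has_integral_const_real[of c 0 1] by simp
    have "((\<lambda>t. a powr p + D * (\<phi> t - a)) has_integral (a powr p + D * (a - a))) {0..1}"
      unfolding a_def by (intro has_integral_add const has_integral_mult_right has_integral_diff integrable_integral int)
    then have "((\<lambda>t. a powr p + D * (\<phi> t - a)) has_integral a powr p) {0..1}"
      by simp
    then show ?thesis
      unfolding a_def[symmetric]
      by (rule has_integral_le[OF _ integrable_integral[OF int_powr]])
        (use nonneg powr_ge_tangent[OF p a] in \<open>auto simp: D_def\<close>)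
  qed
qed

lemma norm_higher_deriv_powr_le_annulus_integral:
  fixes h :: "complex \<Rightarrow> complex"
  assumes hol: "h holomorphic_on UNIV" and p: "1 \<le> p"
  defines "A \<equiv> cball 0 2 - ball 0 1"
  shows "ennreal ((norm ((deriv ^^ n) h 0) / fact n) powr p) * emeasure lborel A
    \<le> (\<integral>\<^sup>+z. indicator A z * ennreal (norm (h z) powr p) \<partial>lborel)"
proof -
  have [measurable]: "h \<in> borel_measurable borel" "A \<in> sets borel" "cis \<in> borel_measurable borel"
    using hol unfolding A_def cis_conv_exp
    by (auto intro: borel_measurable_continuous_onI holomorphic_on_imp_continuous_on)
  define v where "v = (norm ((deriv ^^ n) h 0) / fact n) powr p"
  have circle_powr: "(\<integral>\<^sup>+t. indicator {0..1} t * ennreal (norm (h (z * cis (2 * pi * t))) powr p) \<partial>lborel)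
      = ennreal (integral {0..1} (\<lambda>t. norm (h (z * cis (2 * pi * t))) powr p))" for z
    using p by (subst nn_integral_has_integral_lebesgue[symmetric])
      (auto simp: indicator_mult_ennreal intro!: integrable_integral integrable_continuous_interval
        continuous_on_powr' continuous_on_norm_circle[OF hol])
  have v_le: "v \<le> integral {0..1} (\<lambda>t. norm (h (z * cis (2 * pi * t))) powr p)" if "z \<in> A" for z
  proof -
    have "norm ((deriv ^^ n) h 0) / fact n \<le> norm z ^ n / fact n * norm ((deriv ^^ n) h 0)"
      using that by (simp add: A_def divide_right_mono mult_le_cancel_right1 one_le_power)
    also have "\<dots> \<le> integral {0..1} (\<lambda>t. norm (h (z * cis (2 * pi * t))))"
      by (rule norm_higher_deriv_le_circle_average[OF hol])
    finally have "v \<le> (integral {0..1} (\<lambda>t. norm (h (z * cis (2 * pi * t))))) powr p"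
      unfolding v_def using p by (intro powr_mono2) auto
    also have "\<dots> \<le> integral {0..1} (\<lambda>t. norm (h (z * cis (2 * pi * t))) powr p)"
      by (rule powr_integral_le_integral_powr[OF continuous_on_norm_circle[OF hol] _ p]) simp
    finally show ?thesis .
  qed
  have "ennreal v * emeasure lborel A = (\<integral>\<^sup>+z. ennreal v * indicator A z \<partial>lborel)"
    by (simp add: nn_integral_cmult_indicator)
  also have "\<dots> \<le> (\<integral>\<^sup>+z. \<integral>\<^sup>+t. indicator {0..1} t * (indicator A (z * cis (2 * pi * t))
      * ennreal (norm (h (z * cis (2 * pi * t))) powr p)) \<partial>lborel \<partial>lborel)"
  proof (rule nn_integral_mono)
    fix z :: complex
    have "indicator A (z * cis (2 * pi * t)) = (indicator A z :: ennreal)" for t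
      by (simp add: A_def indicator_def norm_mult)
    then show "ennreal v * indicator A z \<le> (\<integral>\<^sup>+t. indicator {0..1} t * (indicator A (z * cis (2 * pi * t))
      * ennreal (norm (h (z * cis (2 * pi * t))) powr p)) \<partial>lborel)"
      using v_le[of z] by (cases "z \<in> A") (simp_all add: mult.left_commute nn_integral_cmult circle_powr ennreal_leI)
  qed
  also have "\<dots> = (\<integral>\<^sup>+z. indicator A z * ennreal (norm (h z) powr p) \<partial>lborel)"
    by (rule nn_integral_circle_average) measurable
  finally show ?thesis unfolding v_def .
qed

lemma emeasure_annulus_pos_finite:
  "0 < emeasure lborel (cball (0::complex) 2 - ball 0 1) \<and> emeasure lborel (cball (0::complex) 2 - ball 0 1) < \<infinity>"
proof
  have "ball (3/2) (1/2) \<subseteq> cball (0::complex) 2 - ball 0 1"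
  proof
    fix z :: complex
    assume "z \<in> ball (3/2) (1/2)"
    moreover have "norm (3/2::complex) = 3/2" by simp
    ultimately show "z \<in> cball 0 2 - ball 0 1"
      using norm_triangle_ineq2[of z "3/2"] norm_triangle_ineq3[of z "3/2"]
      by (auto simp: dist_norm norm_minus_commute)
  qed
  then have "emeasure lborel (ball (3/2::complex) (1/2)) \<le> emeasure lborel (cball (0::complex) 2 - ball 0 1)"
    by (intro emeasure_mono) auto
  moreover have "0 < emeasure lborel (ball (3/2::complex) (1/2))"
    by (simp add: emeasure_ball unit_ball_vol_pos)
  ultimately show "0 < emeasure lborel (cball (0::complex) 2 - ball 0 1)"
    by (rule order.strict_trans2[rotated])
  have "emeasure lborel (cball (0::complex) 2 - ball 0 1) \<le> emeasure lborel (cball (0::complex) 2)"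
    by (intro emeasure_mono) auto
  then show "emeasure lborel (cball (0::complex) 2 - ball 0 1) < \<infinity>"
    using emeasure_lborel_cball_finite[of "0::complex" 2] by (rule le_less_trans)
qed

lemma fock_space_higher_deriv_bound:
  fixes p \<alpha> m :: real
  assumes p: "1 \<le> p" and \<alpha>: "0 \<le> \<alpha>" and m: "0 \<le> m"
  obtains K where "0 < K"
    and "\<And>h n. h \<in> fock_space p \<alpha> m \<Longrightarrow> norm ((deriv ^^ n) h 0) / fact n \<le> K * fock_norm p \<alpha> m h"
proof
  define A where "A = cball (0::complex) 2 - ball 0 1"
  define \<mu> where "\<mu> = measure lborel A"
  have [measurable]: "A \<in> sets borel" unfolding A_def by measurable
  have \<mu>: "emeasure lborel A = ennreal \<mu>" "0 < \<mu>"
    using emeasure_annulus_pos_finite unfolding A_def[symmetric] \<mu>_def by (auto simp: emeasure_eq_ennreal_measure)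
  \<comment> \<open>The weight is bounded below by \<open>1 / W\<close> on the annulus.\<close>
  define W where "W = exp (p * \<alpha> * 2 powr m)"
  define K where "K = (W / \<mu>) powr (1 / p)"
  show "0 < K" using \<mu> by (simp add: K_def W_def)
  fix h n
  assume "h \<in> fock_space p \<alpha> m"
  then have hol: "h holomorphic_on UNIV"
    and int: "integrable lborel (\<lambda>z. norm (h z) powr p * exp (- p * \<alpha> * norm z powr m))"
    by (auto simp: fock_space_def)
  have [measurable]: "h \<in> borel_measurable borel"
    using hol by (intro borel_measurable_continuous_onI holomorphic_on_imp_continuous_on)
  define I where "I = integral\<^sup>L lborel (\<lambda>z. norm (h z) powr p * exp (- p * \<alpha> * norm z powr m))"
  have "0 \<le> I" unfolding I_def by (intro integral_nonneg_AE) auto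
  define v where "v = (norm ((deriv ^^ n) h 0) / fact n) powr p"
  have weight: "indicator A z * ennreal (norm (h z) powr p)
      \<le> ennreal W * ennreal (norm (h z) powr p * exp (- p * \<alpha> * norm z powr m))" for z
  proof (cases "z \<in> A")
    case True
    then have "norm z powr m \<le> 2 powr m"
      using m by (intro powr_mono2) (auto simp: A_def)
    then have "1 \<le> W * exp (- p * \<alpha> * norm z powr m)"
      using p \<alpha> by (simp add: W_def mult_left_mono flip: exp_add)
    then have "norm (h z) powr p * 1 \<le> norm (h z) powr p * (W * exp (- p * \<alpha> * norm z powr m))"
      by (intro mult_left_mono) auto
    then have "norm (h z) powr p \<le> W * (norm (h z) powr p * exp (- p * \<alpha> * norm z powr m))"
      by (simp add: algebra_simps)
    then show ?thesis
      using True by (simp add: W_def ennreal_leI flip: ennreal_mult)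
  qed simp
  have "ennreal v * ennreal \<mu> \<le> (\<integral>\<^sup>+z. indicator A z * ennreal (norm (h z) powr p) \<partial>lborel)"
    unfolding v_def \<mu>(1)[symmetric] A_def by (rule norm_higher_deriv_powr_le_annulus_integral[OF hol p])
  also have "\<dots> \<le> (\<integral>\<^sup>+z. ennreal W * ennreal (norm (h z) powr p * exp (- p * \<alpha> * norm z powr m)) \<partial>lborel)"
    by (rule nn_integral_mono[OF weight])
  also have "\<dots> = ennreal W * (\<integral>\<^sup>+z. ennreal (norm (h z) powr p * exp (- p * \<alpha> * norm z powr m)) \<partial>lborel)"
    by (rule nn_integral_cmult) simp
  also have "\<dots> = ennreal (W * I)"
    unfolding I_def by (subst nn_integral_eq_integral[OF int]) (auto simp: W_def ennreal_mult)
  finally have "v * \<mu> \<le> W * I"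
    using \<mu> \<open>0 \<le> I\<close> by (simp add: v_def W_def ennreal_le_iff flip: ennreal_mult)
  then have "v \<le> W / \<mu> * I"
    using \<mu> by (simp add: field_simps)
  then have "v powr (1 / p) \<le> (W / \<mu> * I) powr (1 / p)"
    using p by (intro powr_mono2) (simp_all add: v_def)
  moreover have "v powr (1 / p) = norm ((deriv ^^ n) h 0) / fact n"
    using p by (simp add: v_def powr_powr)
  moreover have "(W / \<mu> * I) powr (1 / p) = K * fock_norm p \<alpha> m h"
    unfolding K_def fock_norm_def I_def[symmetric] by (rule powr_mult)
  ultimately show "norm ((deriv ^^ n) h 0) / fact n \<le> K * fock_norm p \<alpha> m h"
    by simp
qed

section \<open>Elements of the Fock space\<close>

lemma powr_add_le:
  fixes x y p :: real
  assumes "0 \<le> x" "0 \<le> y" "0 < p"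
  shows "(x + y) powr p \<le> 2 powr p * (x powr p + y powr p)"
proof -
  have "(x + y) powr p \<le> (2 * max x y) powr p"
    using assms by (intro powr_mono2) auto
  also have "\<dots> = 2 powr p * max x y powr p"
    by (rule powr_mult)
  also have "max x y powr p \<le> x powr p + y powr p"
    by (simp add: max_def)
  finally show ?thesis
    by (simp add: mult_left_mono)
qed

lemma fock_space_mult_diff:
  fixes p \<alpha> m :: real
  assumes p: "0 < p" and f: "f \<in> fock_space p \<alpha> m" and g: "g \<in> fock_space p \<alpha> m"
  shows "(\<lambda>z. c * f z - g z) \<in> fock_space p \<alpha> m"
proof -
  define w where "w = (\<lambda>z::complex. exp (- p * \<alpha> * norm z powr m))"
  have hol: "f holomorphic_on UNIV" "g holomorphic_on UNIV"
    and int: "integrable lborel (\<lambda>z. norm (f z) powr p * w z)" "integrable lborel (\<lambda>z. norm (g z) powr p * w z)"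
    using f g by (auto simp: fock_space_def w_def)
  have [measurable]: "f \<in> borel_measurable borel" "g \<in> borel_measurable borel"
    using hol by (auto intro!: borel_measurable_continuous_onI holomorphic_on_imp_continuous_on)
  have bound: "norm (c * f z - g z) powr p * w z
      \<le> 2 powr p * norm c powr p * (norm (f z) powr p * w z) + 2 powr p * (norm (g z) powr p * w z)" for z
  proof -
    have "norm (c * f z - g z) powr p \<le> (norm (c * f z) + norm (g z)) powr p"
      using p by (intro powr_mono2 norm_triangle_ineq4) auto
    also have "\<dots> \<le> 2 powr p * (norm c powr p * norm (f z) powr p + norm (g z) powr p)"
      using powr_add_le[of "norm (c * f z)" "norm (g z)" p] p by (simp add: norm_mult powr_mult)
    finally have "norm (c * f z - g z) powr p * w z
        \<le> 2 powr p * (norm c powr p * norm (f z) powr p + norm (g z) powr p) * w z"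
      by (rule mult_right_mono) (simp add: w_def)
    then show ?thesis
      by (simp add: algebra_simps)
  qed
  have "integrable lborel (\<lambda>z. 2 powr p * norm c powr p * (norm (f z) powr p * w z)
      + 2 powr p * (norm (g z) powr p * w z))"
    by (intro Bochner_Integration.integrable_add Bochner_Integration.integrable_mult_right int)
  then have "integrable lborel (\<lambda>z. norm (c * f z - g z) powr p * w z)"
    by (rule Bochner_Integration.integrable_bound) (use bound in \<open>auto simp: w_def\<close>)
  moreover have "(\<lambda>z. c * f z - g z) holomorphic_on UNIV"
    using hol by (intro holomorphic_intros)
  ultimately show ?thesis
    by (simp add: fock_space_def w_def)
qed

lemma bounded_above_if_tendsto_at_top:
  fixes f :: "real \<Rightarrow> real"
  assumes cont: "continuous_on {0..} f" and lim: "(f \<longlongrightarrow> 0) at_top"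
  obtains C where "\<And>r. 0 \<le> r \<Longrightarrow> f r \<le> C"
proof -
  obtain R where R: "\<And>r. R \<le> r \<Longrightarrow> f r < 1"
    using order_tendstoD(2)[OF lim, of 1] by (auto simp: eventually_at_top_linorder)
  have "compact (f ` {0..max 0 R})"
    by (rule compact_continuous_image[OF continuous_on_subset[OF cont]]) auto
  then obtain B where B: "\<And>r. r \<in> {0..max 0 R} \<Longrightarrow> f r \<le> B"
    using compact_imp_bounded bounded_real by (metis abs_le_D1 image_eqI)
  show ?thesis
  proof
    fix r :: real
    assume "0 \<le> r"
    show "f r \<le> max B 1"
    proof (cases "r \<le> max 0 R")
      case True
      then show ?thesis using B[of r] \<open>0 \<le> r\<close> by simp
    next
      case False
      then have "R \<le> r" by simp
      then show ?thesis using R[of r] by simp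
    qed
  qed
qed

lemma integrable_lborel_complex_if_le_inverse_square:
  fixes F :: "complex \<Rightarrow> real"
  assumes [measurable]: "F \<in> borel_measurable borel"
    and bound: "\<And>z. \<bar>F z\<bar> \<le> C / (1 + (norm z)\<^sup>2)\<^sup>2"
  shows "integrable lborel F"
proof -
  define g where "g = (\<lambda>x::real. inverse (1 + x\<^sup>2))"
  have [measurable]: "g \<in> borel_measurable borel" unfolding g_def by measurable
  have g_nonneg: "0 \<le> g x" for x unfolding g_def by simp
  \<comment> \<open>The bound dominates the integrable product \<open>g (Re z) * g (Im z)\<close>.\<close>
  have le_product: "\<bar>F z\<bar> \<le> C * (g (Re z) * g (Im z))" for z
  proof -
    have pos: "0 < 1 + (norm z)\<^sup>2"
      by (intro add_pos_nonneg) auto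
    have "0 \<le> C / (1 + (norm z)\<^sup>2)\<^sup>2"
      using bound[of z] abs_ge_zero[of "F z"] by linarith
    with pos have "0 \<le> C"
      by (simp add: zero_le_divide_iff)
    have "(Re z)\<^sup>2 \<le> (norm z)\<^sup>2" "(Im z)\<^sup>2 \<le> (norm z)\<^sup>2"
      using abs_Re_le_cmod[of z] abs_Im_le_cmod[of z] by (simp_all flip: abs_le_square_iff)
    then have "(1 + (Re z)\<^sup>2) * (1 + (Im z)\<^sup>2) \<le> (1 + (norm z)\<^sup>2)\<^sup>2"
      unfolding power2_eq_square[of "1 + _"] by (intro mult_mono) auto
    then have "C / (1 + (norm z)\<^sup>2)\<^sup>2 \<le> C / ((1 + (Re z)\<^sup>2) * (1 + (Im z)\<^sup>2))"
      using \<open>0 \<le> C\<close> pos by (intro divide_left_mono mult_pos_pos zero_less_power add_pos_nonneg) auto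
    then show ?thesis
      using bound[of z] by (simp add: g_def field_simps)
  qed
  have "integrable lborel g"
    using integrable_inverse_1_plus_square by (simp add: g_def set_integrable_def einterval_def)
  then have g_finite: "(\<integral>\<^sup>+x. ennreal (g x) \<partial>lborel) < \<infinity>"
    using nn_integral_eq_integral[of lborel g] g_nonneg by simp
  have "(\<integral>\<^sup>+z. ennreal (g (Re z) * g (Im z)) \<partial>lborel) = (\<integral>\<^sup>+(z::complex). (\<Prod>b\<in>Basis. ennreal (g (z \<bullet> b))) \<partial>lborel)"
    by (simp add: Basis_complex_def g_nonneg ennreal_mult')
  also have "\<dots> = (\<Prod>b\<in>(Basis::complex set). \<integral>\<^sup>+x. ennreal (g x) \<partial>lborel)"
    by (rule nn_integral_lborel_prod) auto
  finally have "(\<integral>\<^sup>+z. ennreal (g (Re z) * g (Im z)) \<partial>lborel) < \<infinity>"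
    using g_finite by (simp add: Basis_complex_def ennreal_mult_less_top)
  then have "integrable lborel (\<lambda>z. g (Re z) * g (Im z))"
    by (intro integrableI_bounded) (auto simp: g_nonneg)
  then show ?thesis
    by (rule Bochner_Integration.integrable_bound[OF integrable_mult_right[of C]])
      (use le_product in \<open>auto intro: order_trans[OF _ abs_ge_self]\<close>)
qed

lemma affine_in_fock_space:
  fixes p \<alpha> m :: real and a b :: complex
  assumes p: "1 \<le> p" and \<alpha>: "0 < \<alpha>" and m: "0 < m"
  shows "(\<lambda>z. a + b * z) \<in> fock_space p \<alpha> m"
proof -
  define f where "f = (\<lambda>r::real. (1 + r\<^sup>2)\<^sup>2 * (1 + r) powr p * exp (- p * \<alpha> * r powr m))"
  have "continuous_on {0..} f"
    unfolding f_def by (intro continuous_intros continuous_on_powr') (auto simp: m)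
  moreover have "(f \<longlongrightarrow> 0) at_top"
    unfolding f_def using p \<alpha> m by real_asymp
  ultimately obtain C where C: "\<And>r. 0 \<le> r \<Longrightarrow> f r \<le> C"
    using bounded_above_if_tendsto_at_top by blast
  define A where "A = (norm a + norm b) powr p"
  have "\<bar>norm (a + b * z) powr p * exp (- p * \<alpha> * norm z powr m)\<bar> \<le> A * C / (1 + (norm z)\<^sup>2)\<^sup>2" for z
  proof -
    have "norm (a + b * z) \<le> norm a + norm b * norm z"
      using norm_triangle_ineq[of a "b * z"] by (simp add: norm_mult)
    also have "\<dots> \<le> (norm a + norm b) * (1 + norm z)"
      using mult_nonneg_nonneg[OF norm_ge_zero norm_ge_zero, of a z] by (simp add: algebra_simps)
    finally have "norm (a + b * z) \<le> (norm a + norm b) * (1 + norm z)" .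
    then have "norm (a + b * z) powr p \<le> A * (1 + norm z) powr p"
      unfolding A_def powr_mult[symmetric] using p by (intro powr_mono2) auto
    then have "norm (a + b * z) powr p * exp (- p * \<alpha> * norm z powr m)
        \<le> A * (1 + norm z) powr p * exp (- p * \<alpha> * norm z powr m)"
      by (rule mult_right_mono) simp
    also have "\<dots> = A * f (norm z) / (1 + (norm z)\<^sup>2)\<^sup>2"
      using add_pos_nonneg[OF zero_less_one zero_le_power2[of "norm z"]] by (simp add: f_def)
    also have "\<dots> \<le> A * C / (1 + (norm z)\<^sup>2)\<^sup>2"
      using C[of "norm z"] by (intro divide_right_mono mult_left_mono) (auto simp: A_def)
    finally show ?thesis by simp
  qed
  then have "integrable lborel (\<lambda>z. norm (a + b * z) powr p * exp (- p * \<alpha> * norm z powr m))"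
    by (intro integrable_lborel_complex_if_le_inverse_square) measurable
  then show ?thesis
    unfolding fock_space_def by (auto intro!: holomorphic_intros)
qed

section \<open>The Hardy operator at the origin\<close>

lemma hardy_0 [simp]: "hardy f 0 = f 0"
  by (simp add: hardy_def)

lemma tendsto_contour_integral_linepath_div_square:
  fixes R :: "complex \<Rightarrow> complex"
  assumes cont: "continuous_on UNIV R" and "R 0 = 0" and lim: "((\<lambda>w. R w / w) \<longlongrightarrow> 0) (at 0)"
  shows "((\<lambda>z. contour_integral (linepath 0 z) R / z\<^sup>2) \<longlongrightarrow> 0) (at 0)"
proof (rule tendstoI)
  fix e :: real
  assume "0 < e"
  then obtain d where "0 < d" and d: "\<And>w. w \<noteq> 0 \<Longrightarrow> norm w < d \<Longrightarrow> norm (R w / w) < e / 2"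
    using LIM_D[OF lim, of "e / 2"] by auto
  have R_le: "norm (R w) \<le> e / 2 * norm w" if "norm w < d" for w
    using d[of w] that \<open>R 0 = 0\<close> by (cases "w = 0") (auto simp: norm_divide field_simps)
  have "norm (contour_integral (linepath 0 z) R / z\<^sup>2) < e" if "z \<noteq> 0" "norm z < d" for z
  proof -
    have "(R has_contour_integral contour_integral (linepath 0 z) R) (linepath 0 z)"
      by (intro has_contour_integral_integral contour_integrable_continuous_linepath
          continuous_on_subset[OF cont]) auto
    then have "norm (contour_integral (linepath 0 z) R) \<le> e / 2 * norm z * norm (z - 0)"
    proof (rule has_contour_integral_bound_linepath)
      fix w
      assume "w \<in> closed_segment 0 z"
      then have "norm w \<le> norm z"
        using segment_bound[of w 0 z] by simp
      moreover have "e / 2 * norm w \<le> e / 2 * norm z"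
        using \<open>norm w \<le> norm z\<close> \<open>0 < e\<close> by simp
      ultimately show "norm (R w) \<le> e / 2 * norm z"
        using R_le[of w] that by linarith
    qed (use \<open>0 < e\<close> in simp)
    moreover have "0 < e * (norm z * norm z)"
      using that \<open>0 < e\<close> by simp
    ultimately show ?thesis
      using that by (simp add: norm_divide norm_mult power2_eq_square field_simps)
  qed
  then show "eventually (\<lambda>z. dist (contour_integral (linepath 0 z) R / z\<^sup>2) 0 < e) (at 0)"
    unfolding eventually_at using \<open>0 < d\<close> by (auto simp: dist_norm)
qed

lemma hardy_has_field_derivative_0:
  assumes hol: "f holomorphic_on UNIV"
  shows "(hardy f has_field_derivative deriv f 0 / 2) (at 0)"
proof -
  define L where "L = deriv f 0"
  define R where "R = (\<lambda>w. f w - f 0 - L * w)"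
  have "(f has_field_derivative L) (at 0)"
    unfolding L_def using hol by (simp add: holomorphic_derivI)
  then have "((\<lambda>w. (f w - f 0) / (w - 0) - L) \<longlongrightarrow> L - L) (at 0)"
    unfolding has_field_derivative_iff by (intro tendsto_diff tendsto_const)
  then have "((\<lambda>w. R w / w) \<longlongrightarrow> 0) (at 0)"
    unfolding diff_self
    by (rule Lim_transform_eventually) (auto simp: eventually_at_filter R_def diff_divide_distrib)
  moreover have cont: "continuous_on UNIV R"
    unfolding R_def by (intro continuous_intros holomorphic_on_imp_continuous_on[OF hol])
  ultimately have "((\<lambda>z. contour_integral (linepath 0 z) R / z\<^sup>2 + L / 2) \<longlongrightarrow> 0 + L / 2) (at 0)"
    by (intro tendsto_add tendsto_contour_integral_linepath_div_square tendsto_const) (simp_all add: R_def)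
  moreover have "(hardy f z - hardy f 0) / (z - 0) = contour_integral (linepath 0 z) R / z\<^sup>2 + L / 2"
    if "z \<noteq> 0" for z
  proof -
    have "((\<lambda>w. f 0 * w + L * w\<^sup>2 / 2) has_field_derivative f 0 + L * w) (at w within UNIV)" for w
      by (rule derivative_eq_intros refl | simp)+
    then have linear: "((\<lambda>w. f 0 + L * w) has_contour_integral (f 0 * z + L * z\<^sup>2 / 2)) (linepath 0 z)"
      using contour_integral_primitive[of UNIV "\<lambda>w. f 0 * w + L * w\<^sup>2 / 2" "\<lambda>w. f 0 + L * w" "linepath 0 z"]
      by simp
    have "f contour_integrable_on linepath 0 z"
      by (intro contour_integrable_continuous_linepath continuous_on_subset[OF holomorphic_on_imp_continuous_on[OF hol]]) auto
    then have "contour_integral (linepath 0 z) R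
        = contour_integral (linepath 0 z) f - contour_integral (linepath 0 z) (\<lambda>w. f 0 + L * w)"
      unfolding R_def diff_diff_eq by (rule contour_integral_diff) (use linear in \<open>auto simp: contour_integrable_on_def\<close>)
    also have "contour_integral (linepath 0 z) (\<lambda>w. f 0 + L * w) = f 0 * z + L * z\<^sup>2 / 2"
      by (rule contour_integral_unique[OF linear])
    finally have eq: "contour_integral (linepath 0 z) R = z * hardy f z - (f 0 * z + L * z\<^sup>2 / 2)"
      using that by (simp add: hardy_def del: linepath_0)
    show ?thesis
      unfolding eq using that by (simp add: field_simps power2_eq_square)
  qed
  ultimately have "((\<lambda>z. (hardy f z - hardy f 0) / (z - 0)) \<longlongrightarrow> L / 2) (at 0)"
    by (simp add: Lim_transform_eventually eventually_at_filter tendsto_cong)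
  then show ?thesis
    unfolding has_field_derivative_iff L_def .
qed

section \<open>Non-supercyclicity\<close>

lemma funpow_value_deriv_at_0:
  assumes preserves_value: "\<And>f. f \<in> X \<Longrightarrow> T f 0 = f 0"
    and scales_deriv: "\<And>f. f \<in> X \<Longrightarrow> deriv (T f) 0 = \<mu> * deriv f 0"
    and iterates: "\<And>k. (T ^^ k) x \<in> X"
  shows "(T ^^ n) x 0 = x 0 \<and> deriv ((T ^^ n) x) 0 = \<mu> ^ n * deriv x 0"
  using iterates[of n] by (induction n) (simp_all add: preserves_value scales_deriv iterates)

text \<open>
  The functionals \<open>h \<mapsto> h 0\<close> and \<open>h \<mapsto> h' 0\<close> are eigenvectors of the adjoint of \<open>T\<close> for the eigenvalues
  \<open>1\<close> and \<open>\<mu>\<close>; the projective orbit of \<open>x\<close> then stays away from \<open>1 + M z\<close> for large \<open>M\<close>.\<close>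
lemma not_supercyclic_on_if_fixes_value_at_0:
  fixes X :: "(complex \<Rightarrow> complex) set" and N :: "(complex \<Rightarrow> complex) \<Rightarrow> real"
  assumes hol: "\<And>f. f \<in> X \<Longrightarrow> f holomorphic_on UNIV"
    and bounded: "0 < K" "\<And>h. h \<in> X \<Longrightarrow> norm (h 0) \<le> K * N h \<and> norm (deriv h 0) \<le> K * N h"
    and mult_diff: "\<And>f g c. f \<in> X \<Longrightarrow> g \<in> X \<Longrightarrow> (\<lambda>z. c * f z - g z) \<in> X"
    and affine: "\<And>a b. (\<lambda>z. a + b * z) \<in> X"
    and preserves_value: "\<And>f. f \<in> X \<Longrightarrow> T f 0 = f 0"
    and scales_deriv: "\<And>f. f \<in> X \<Longrightarrow> deriv (T f) 0 = \<mu> * deriv f 0"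
    and \<mu>: "norm \<mu> \<le> 1"
  shows "\<not> supercyclic_on X N T"
proof
  assume "supercyclic_on X N T"
  then obtain x where iterates: "\<And>n. (T ^^ n) x \<in> X"
    and dense: "\<And>g \<epsilon>. g \<in> X \<Longrightarrow> 0 < \<epsilon> \<Longrightarrow> \<exists>n c. N (\<lambda>z. c * (T ^^ n) x z - g z) < \<epsilon>"
    unfolding supercyclic_on_def by blast
  define Q where "Q = norm (deriv x 0) / norm (x 0)"
  define M where "M = 2 * Q + 1"
  define g where "g = (\<lambda>z. 1 + complex_of_real M * z)"
  obtain n c where "N (\<lambda>z. c * (T ^^ n) x z - g z) < 1 / (2 * K)"
    using dense[OF affine[of 1 M, folded g_def], of "1 / (2 * K)"] \<open>0 < K\<close> by auto
  moreover define h where "h = (\<lambda>z. c * (T ^^ n) x z - g z)"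
  ultimately have "K * N h < 1 / 2"
    using \<open>0 < K\<close> by (simp add: field_simps)
  moreover have "h \<in> X"
    unfolding h_def g_def by (intro mult_diff iterates affine)
  ultimately have small: "norm (h 0) < 1 / 2" "norm (deriv h 0) < 1 / 2"
    using bounded(2) by fastforce+
  have "((T ^^ n) x has_field_derivative deriv ((T ^^ n) x) 0) (at 0)"
    by (rule holomorphic_derivI[OF hol[OF iterates]]) auto
  then have "(h has_field_derivative c * deriv ((T ^^ n) x) 0 - M) (at 0)"
    unfolding h_def g_def by (auto intro!: derivative_eq_intros)
  then have h_at_0: "h 0 = c * x 0 - 1" "deriv h 0 = c * \<mu> ^ n * deriv x 0 - M"
    using funpow_value_deriv_at_0[OF preserves_value scales_deriv iterates, of n] by (simp_all add: h_def g_def DERIV_imp_deriv)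
  have "x 0 \<noteq> 0"
    using small(1) h_at_0(1) by auto
  \<comment> \<open>The first estimate bounds \<open>\<bar>c\<bar>\<close>, and then the second one fails.\<close>
  have "norm c * norm (x 0) < 3 / 2"
    using small(1) h_at_0(1) norm_triangle_ineq2[of "c * x 0" 1] by (simp add: norm_mult)
  then have "norm c \<le> 3 / 2 / norm (x 0)"
    using \<open>x 0 \<noteq> 0\<close> by (simp add: field_simps)
  then have "norm c * norm (deriv x 0) \<le> 3 / 2 / norm (x 0) * norm (deriv x 0)"
    by (rule mult_right_mono) simp
  then have "norm c * norm (deriv x 0) \<le> 3 / 2 * Q"
    by (simp add: Q_def)
  moreover have "norm (c * \<mu> ^ n * deriv x 0) \<le> norm c * norm (deriv x 0)"
  proof -
    have "norm \<mu> ^ n * (norm c * norm (deriv x 0)) \<le> 1 * (norm c * norm (deriv x 0))"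
      using \<mu> by (intro mult_right_mono power_le_one) auto
    then show ?thesis
      by (simp add: norm_mult norm_power mult_ac)
  qed
  moreover have "M - norm (c * \<mu> ^ n * deriv x 0) < 1 / 2"
    using small(2) h_at_0(2) norm_triangle_ineq2[of M "c * \<mu> ^ n * deriv x 0"]
    by (simp add: norm_minus_commute)
  moreover have "0 \<le> Q"
    by (simp add: Q_def)
  ultimately show False
    unfolding M_def by linarith
qed

theorem corollary3:
  fixes p \<alpha> m :: real
  assumes "1 \<le> p" and "0 < \<alpha>" and "0 < m"
  shows "\<not> supercyclic_on (fock_space p \<alpha> m) (fock_norm p \<alpha> m) hardy"
proof -
  obtain K where "0 < K"
    and K: "\<And>h n. h \<in> fock_space p \<alpha> m \<Longrightarrow> norm ((deriv ^^ n) h 0) / fact n \<le> K * fock_norm p \<alpha> m h"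
    using fock_space_higher_deriv_bound[of p \<alpha> m] assms by auto
  show ?thesis
  proof (rule not_supercyclic_on_if_fixes_value_at_0[where \<mu> = "1 / 2"])
    show "norm (h 0) \<le> K * fock_norm p \<alpha> m h \<and> norm (deriv h 0) \<le> K * fock_norm p \<alpha> m h"
      if "h \<in> fock_space p \<alpha> m" for h
      using K[OF that, of 0] K[OF that, of 1] by simp
    show "deriv (hardy f) 0 = 1 / 2 * deriv f 0" if "f \<in> fock_space p \<alpha> m" for f
      using that by (simp add: fock_space_def DERIV_imp_deriv[OF hardy_has_field_derivative_0])
    show "(\<lambda>z. c * f z - g z) \<in> fock_space p \<alpha> m"
      if "f \<in> fock_space p \<alpha> m" "g \<in> fock_space p \<alpha> m" for f g c
      using assms that by (simp add: fock_space_mult_diff)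
    show "(\<lambda>z. a + b * z) \<in> fock_space p \<alpha> m" for a b
      using assms by (rule affine_in_fock_space)
  qed (use \<open>0 < K\<close> in \<open>auto simp: fock_space_def\<close>)
qed

end
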